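(* Assume Conditions (C1) and (C2) hold, with $\alpha\in(0,1]$ in (C1). If $$\limsup_{n\to\infty}\frac{\Phi_\Lambda(n)-\Phi_\mu(n)}{n\log n(\log\log n)^2}=-\infty,$$ then the block-counting process $N$ explodes.
   Context: Setting: $\mathbb{N}_+=\{1,2,\dots\}$. $\Lambda$ is a finite measure on $[0,1]$ with $\Lambda(\{1\})=0$, absolutely continuous w.r.t. Lebesgue measure. For $2\le k\le n$, $\lambda_{n,k}=\int_{[0,1]}x^{k-2}(1-x)^{n-k}\Lambda(dx)$ and $\Phi_\Lambda(n)=\sum_{k=2}^n\binom nk\lambda_{n,k}(k-1)$. $\mu$ is a finite measure on $\mathbb{N}_+$ (splitting measure; $\mu(k):=\mu(\{k\})$) and $\Phi_\mu(n)=n\sum_{k=1}^n k\mu(k)$. $N=(N_t)_{t\ge0}$ is the block-counting process of a simple exchangeable fragmentation–coagulation process on partitions of $\mathbb{N}_+$, whose coagulations are those of the $\Lambda$-coalescent (no simultaneous multiple mergers) and whose fragmentations occur at finite rate, each splitting one block into $k+1$ infinite blocks, the image of the fragmentation measure under $\pi\mapsto\#\pi-1$ being $\mu$. Started from $n\in\mathbb{N}_+$ and up to $\tau^+_\infty=\inf\{t>0:N_{t-}=\infty\}$, $N$ is the continuous-time Markov chain on $\mathbb{N}_+$ jumping from $n$ to $n-k+1$ at rate $\binom nk\lambda_{n,k}$ ($2\le k\le n$) and from $n$ to $n+k$ at rate $n\mu(k)$. Explosion: $N$ explodes if, started from any finite $N_0$, $\mathbf{P}(N_t=\infty\text{ for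 some }t>0)=1$. Condition (C1): $\mu(n)\sim b(\log n)^\alpha n^{-2}$ as $n\to\infty$ for constants $b>0,\alpha>0$. Condition (C2): there exist constants $\beta>1$ and $C_1,C_2>0$ such that $C_1(\log\frac1x)^{\beta-1}dx\le\Lambda(dx)\le C_2(\log\frac1x)^{\beta-1}dx$ on $(0,1)$. *)

theory Defs
  imports "HOL-Probability.Probability" "HOL-Library.Landau_Symbols"
begin

text \<open>The measure Lambda on [0,1] is given by its Lebesgue density lam_dens.
  lambda_{n,k} = int_[0,1] x^(k-2) (1-x)^(n-k) Lambda(dx).\<close>
definition lam_nk :: "(real \<Rightarrow> real) \<Rightarrow> nat \<Rightarrow> nat \<Rightarrow> real" where
  "lam_nk lam_dens n k =
     set_lebesgue_integral lborel {0..1} (\<lambda>x. x ^ (k - 2) * (1 - x) ^ (n - k) * lam_dens x)"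

definition Phi_Lambda :: "(real \<Rightarrow> real) \<Rightarrow> nat \<Rightarrow> real" where
  "Phi_Lambda lam_dens n = (\<Sum>k=2..n. real (n choose k) * lam_nk lam_dens n k * (real k - 1))"

text \<open>mu k = mu({k}) for k >= 1 (the value mu 0 is never used).\<close>
definition Phi_mu :: "(nat \<Rightarrow> real) \<Rightarrow> nat \<Rightarrow> real" where
  "Phi_mu mu n = real n * (\<Sum>k=1..n. real k * mu k)"

text \<open>Jump rate of the block-counting process from n to m (states in N_+):
  n -> n-k+1 at rate (n choose k) lambda_{n,k} (2 <= k <= n), n -> n+k at rate n mu(k).\<close>
definition N_rate :: "(real \<Rightarrow> real) \<Rightarrow> (nat \<Rightarrow> real) \<Rightarrow> nat \<Rightarrow> nat \<Rightarrow> real" where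
  "N_rate lam_dens mu n m =
     (if 1 \<le> m \<and> m < n then real (n choose (n - m + 1)) * lam_nk lam_dens n (n - m + 1)
      else if n < m then real n * mu (m - n)
      else 0)"

definition total_rate :: "(nat \<Rightarrow> nat \<Rightarrow> real) \<Rightarrow> nat \<Rightarrow> real" where
  "total_rate r n = (\<Sum>m. r n m)"

text \<open>Jump chain Y with i.i.d. Exp(1) variables E independent of Y, chain started at n0:
  the k-th holding time of the continuous-time chain is E k / total_rate (Y k).\<close>
definition jump_hold_process ::
  "(nat \<Rightarrow> nat \<Rightarrow> real) \<Rightarrow> nat \<Rightarrow> 'a measure \<Rightarrow> (nat \<Rightarrow> 'a \<Rightarrow> nat) \<Rightarrow> (nat \<Rightarrow> 'a \<Rightarrow> real) \<Rightarrow> bool"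
where
  "jump_hold_process r n0 M Y E \<longleftrightarrow>
     prob_space M \<and>
     (\<forall>k. Y k \<in> measurable M (count_space UNIV)) \<and>
     (\<forall>k. E k \<in> borel_measurable M) \<and>
     (\<forall>k (y::nat \<Rightarrow> nat) (t::nat \<Rightarrow> real).
        measure M {x \<in> space M. \<forall>i\<le>k. Y i x = y i \<and> E i x \<le> t i} =
          (if y 0 = n0 then 1 else 0)
          * (\<Prod>i<k. r (y i) (y (Suc i)) / total_rate r (y i))
          * (\<Prod>i\<le>k. if t i \<le> 0 then 0 else 1 - exp (- t i)))"

end

theory Submission
  imports Defs "HOL-Real_Asymp.Real_Asymp"
begin

text \<open>
  Let \<open>w n = 1 / (n ln n (ln ln n)\<^sup>2)\<close>, which is summable, and let the Lyapunov function
  \<open>g n\<close> be the tail \<open>\<Sum>j\<ge>max n N. w j\<close>, which is bounded. A fragmentation from \<open>n\<close>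
  to \<open>n + k\<close> lowers \<open>g\<close> by about \<open>k w n\<close> and a merger to \<open>n - k + 1\<close> raises it by about
  \<open>(k - 1) w n\<close>, so the generator applied to \<open>g\<close> is
  \<open>w n (\<Phi>\<^sub>\<Lambda>(n) - \<Phi>\<^sub>\<mu>(n))\<close> up to second-order terms of relative size \<open>k/n\<close>. For
  mergers these add up to \<open>O(1)\<close> because \<open>\<Sum>\<^sub>k (n choose k) \<lambda>(n,k) k(k-1) = n(n-1) \<Lambda>([0,1])\<close>;
  for fragmentations to \<open>O(w n \<Sum>\<^bsub>k\<le>n\<^esub> k\<^sup>2 \<mu>(k)) = O(1)\<close>, because (C1) with \<open>\<alpha> \<le> 1\<close>
  gives \<open>k\<^sup>2 \<mu>(k) = O(log k)\<close>. The limsup hypothesis therefore makes the drift of \<open>g\<close>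
  at most \<open>-1\<close> above some level \<open>N\<close>; below \<open>N\<close>, \<open>g\<close> is constant and the
  fragmentations overshooting \<open>N\<close> give a negative drift. With drift \<open>\<le> -\<epsilon>\<close>
  everywhere, \<open>g(Y\<^sub>k) + \<epsilon> \<Sum>\<^bsub>j<k\<^esub> (holding time j)\<close> decreases in expectation along the
  jump chain, so the expected total holding time is at most \<open>g(n\<^sub>0)/\<epsilon>\<close>, and the holding
  times are almost surely summable.
\<close>

section \<open>The scale \<open>n log n (log log n)\<^sup>2\<close>\<close>

lemma ln_ln_ge_1:
  fixes x :: real
  assumes "27 \<le> x"
  shows "1 \<le> ln x" and "1 \<le> ln (ln x)"
proof -
  have "exp 3 = exp (1::real) ^ 3" by (simp add: exp_of_nat_mult[symmetric])
  also have "\<dots> \<le> 3 ^ 3" by (intro power_mono exp_le) auto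
  finally have "exp 3 \<le> x" using assms by simp
  then have ln3: "3 \<le> ln x" by (metis exp_gt_zero ln_exp ln_le_cancel_iff order_less_le_trans)
  then show "1 \<le> ln x" by simp
  have "exp 1 \<le> ln x" using exp_le ln3 by linarith
  then show "1 \<le> ln (ln x)" by (metis exp_gt_zero ln_exp ln_le_cancel_iff order_less_le_trans)
qed

definition loglog_scale :: "real \<Rightarrow> real" where
  "loglog_scale x = x * ln x * (ln (ln x))\<^sup>2"

definition inv_scale :: "nat \<Rightarrow> real" where
  "inv_scale j = 1 / loglog_scale (real j)"

lemma loglog_scale_ge_1:
  assumes "27 \<le> x"
  shows "1 \<le> loglog_scale x"
proof -
  have "1 \<le> ln x" "1 \<le> (ln (ln x))\<^sup>2" using ln_ln_ge_1[OF assms] by (auto simp: one_le_power)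
  then have "1 * 1 * 1 \<le> x * ln x * (ln (ln x))\<^sup>2" using assms by (intro mult_mono) auto
  then show ?thesis unfolding loglog_scale_def by simp
qed

lemma inv_scale_nonneg: "0 \<le> inv_scale j"
  unfolding inv_scale_def loglog_scale_def by (cases "j = 0") auto

lemma inv_scale_pos: "27 \<le> j \<Longrightarrow> 0 < inv_scale j"
  unfolding inv_scale_def using loglog_scale_ge_1[of "real j"] by simp

lemma inv_scale_le_1: "27 \<le> j \<Longrightarrow> inv_scale j \<le> 1"
  unfolding inv_scale_def using loglog_scale_ge_1[of "real j"] by simp

lemma n_ln_n_inv_scale_le_1: "27 \<le> n \<Longrightarrow> real n * ln (real n) * inv_scale n \<le> 1"
proof -
  assume n: "27 \<le> n"
  have "1 \<le> (ln (ln (real n)))\<^sup>2" using ln_ln_ge_1[of "real n"] n by (simp add: one_le_power)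
  moreover have "0 < real n * ln (real n)" using ln_ln_ge_1[of "real n"] n by simp
  ultimately show ?thesis unfolding inv_scale_def loglog_scale_def by (simp add: divide_le_eq_1)
qed

lemma n_inv_scale_le_1: "27 \<le> n \<Longrightarrow> real n * inv_scale n \<le> 1"
proof -
  assume n: "27 \<le> n"
  have "real n * inv_scale n * 1 \<le> real n * inv_scale n * ln (real n)"
    using ln_ln_ge_1(1)[of "real n"] n inv_scale_nonneg[of n] by (intro mult_left_mono) auto
  then show ?thesis using n_ln_n_inv_scale_le_1[OF n] by (simp add: mult_ac)
qed

lemma loglog_scale_growth:
  fixes x y :: real
  assumes x: "27 \<le> x" and xy: "x \<le> y"
  shows "loglog_scale y \<le> loglog_scale x * (y / x) ^ 4"
proof -
  define t where "t = (y - x) / x"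
  have t0: "0 \<le> t" using x xy unfolding t_def by auto
  have yx: "y / x = 1 + t" using x unfolding t_def by (simp add: field_simps)
  have l1: "1 \<le> ln x" and ll1: "1 \<le> ln (ln x)" using ln_ln_ge_1 x by auto
  have lnx_le: "ln x \<le> ln y" using x xy by simp
  have "ln y - ln x \<le> t" using ln_diff_le[of y x] x xy unfolding t_def by simp
  also have "\<dots> \<le> ln x * t" using l1 t0 by (simp add: mult_le_cancel_right1)
  finally have lny: "ln y \<le> ln x * (1 + t)" by (simp add: algebra_simps)
  have "ln (ln y) - ln (ln x) \<le> (ln y - ln x) / ln x"
    using ln_diff_le[of "ln y" "ln x"] l1 lnx_le by simp
  also have "\<dots> \<le> ln x * t / ln x" using lny l1 by (intro divide_right_mono) (auto simp: algebra_simps)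
  also have "\<dots> \<le> ln (ln x) * t" using l1 ll1 t0 by (simp add: mult_le_cancel_right1)
  finally have llny: "ln (ln y) \<le> ln (ln x) * (1 + t)" by (simp add: algebra_simps)
  have llpos: "0 \<le> ln (ln y)" using ln_ln_ge_1[of y] x xy by simp
  have "loglog_scale y = (x * (1 + t)) * ln y * (ln (ln y))\<^sup>2"
    unfolding loglog_scale_def using x yx by (simp add: field_simps)
  also have "\<dots> \<le> (x * (1 + t)) * (ln x * (1 + t)) * (ln (ln x) * (1 + t))\<^sup>2"
    using x t0 l1 llpos lnx_le by (intro mult_mono lny power_mono llny) auto
  also have "\<dots> = loglog_scale x * (y / x) ^ 4"
    unfolding loglog_scale_def yx by (simp add: power2_eq_square power4_eq_xxxx)
  finally show ?thesis .
qed

lemma inv_scale_lower: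
  assumes n: "27 \<le> n" and j: "n \<le> j"
  shows "inv_scale n * (1 - 4 * (real j - real n) / real n) \<le> inv_scale j"
proof -
  define t where "t = (real j - real n) / real n"
  have t0: "0 \<le> t" using n j unfolding t_def by auto
  have jn: "real j / real n = 1 + t" using n unfolding t_def by (simp add: field_simps)
  have growth: "loglog_scale (real j) \<le> loglog_scale (real n) * (1 + t) ^ 4"
    using loglog_scale_growth[of "real n" "real j"] n j jn by simp
  have "(1 - 4 * t) * (1 + t) ^ 4 = 1 - (10 * t^2 + 20 * t^3 + 15 * t^4 + 4 * t^5)"
    by (simp add: algebra_simps power2_eq_square power3_eq_cube power4_eq_xxxx eval_nat_numeral)
  also have "\<dots> \<le> 1" using t0 zero_le_power[OF t0] by (smt (verit))
  finally have "(1 - 4 * t) * (1 + t) ^ 4 \<le> 1" .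
  have ln1: "1 \<le> loglog_scale (real n)" "1 \<le> loglog_scale (real j)"
    using loglog_scale_ge_1 n j by auto
  have "(1 - 4 * t) * loglog_scale (real j) \<le> loglog_scale (real n)"
  proof (cases "1 - 4 * t \<le> 0")
    case True then show ?thesis using ln1 by (smt (verit) mult_nonpos_nonneg)
  next
    case False
    then have "(1 - 4 * t) * loglog_scale (real j) \<le> (1 - 4 * t) * (loglog_scale (real n) * (1 + t) ^ 4)"
      using growth by (intro mult_left_mono) auto
    also have "\<dots> \<le> loglog_scale (real n)"
      using \<open>(1 - 4 * t) * (1 + t) ^ 4 \<le> 1\<close> ln1 by (simp add: mult.left_commute mult_le_cancel_left1)
    finally show ?thesis .
  qed
  then show ?thesis using ln1 unfolding inv_scale_def t_def by (simp add: field_simps)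
qed

lemma inv_scale_upper:
  assumes j: "27 \<le> j" and jn: "j \<le> n" and n2: "n \<le> 2 * j"
  shows "inv_scale j \<le> inv_scale n * (1 + 30 * (real n - real j) / real n)"
proof -
  define s where "s = (real n - real j) / real j"
  have s0: "0 \<le> s" and s1: "s \<le> 1" using j jn n2 unfolding s_def by (auto simp: field_simps)
  have nj: "real n / real j = 1 + s" using j unfolding s_def by (simp add: field_simps)
  have growth: "loglog_scale (real n) \<le> loglog_scale (real j) * (1 + s) ^ 4"
    using loglog_scale_growth[of "real j" "real n"] j jn nj by simp
  have "(1 + s) ^ 4 = 1 + s * (4 + 6 * s + 4 * s^2 + s^3)"
    by (simp add: algebra_simps power2_eq_square power3_eq_cube power4_eq_xxxx eval_nat_numeral)
  also have "\<dots> \<le> 1 + s * 15"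
    using s0 s1 power_le_one[of s 2] power_le_one[of s 3] by (intro add_left_mono mult_left_mono) auto
  also have "\<dots> \<le> 1 + 30 * (real n - real j) / real n"
  proof -
    have "(real n - real j) * (real n - 2 * real j) \<le> 0"
      by (rule mult_nonneg_nonpos) (use jn n2 in auto)
    then have "s \<le> 2 * (real n - real j) / real n"
      unfolding s_def using j jn by (auto simp: field_simps algebra_simps)
    then show ?thesis by linarith
  qed
  finally have pow: "(1 + s) ^ 4 \<le> 1 + 30 * (real n - real j) / real n" .
  have ln1: "1 \<le> loglog_scale (real n)" "1 \<le> loglog_scale (real j)"
    using loglog_scale_ge_1 j jn by auto
  have "inv_scale j \<le> (1 + s) ^ 4 / loglog_scale (real n)"
    using growth ln1 unfolding inv_scale_def by (simp add: field_simps)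
  also have "\<dots> \<le> (1 + 30 * (real n - real j) / real n) / loglog_scale (real n)"
    using pow ln1 by (intro divide_right_mono) auto
  finally show ?thesis unfolding inv_scale_def by simp
qed

lemma inv_scale_Suc_le_telescoping:
  assumes "27 \<le> j"
  shows "inv_scale (Suc j) \<le> 1 / ln (ln (real j)) - 1 / ln (ln (real (Suc j)))"
proof -
  define x where "x = real j"
  define y where "y = real (Suc j)"
  have x27: "27 \<le> x" and y27: "27 \<le> y" and yx: "y = x + 1" using assms unfolding x_def y_def by auto
  have l1x: "1 \<le> ln x" and ll1x: "1 \<le> ln (ln x)" using ln_ln_ge_1[OF x27] by auto
  have l1y: "1 \<le> ln y" and ll1y: "1 \<le> ln (ln y)" using ln_ln_ge_1[OF y27] by auto
  have "1 / y \<le> ln y - ln x" using ln_diff_le[of x y] x27 yx by simp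
  moreover have "(ln y - ln x) / ln y \<le> ln (ln y) - ln (ln x)"
    using ln_diff_le[of "ln x" "ln y"] l1x l1y by (simp add: diff_divide_distrib)
  ultimately have d2: "1 / (y * ln y) \<le> ln (ln y) - ln (ln x)"
    using l1y divide_right_mono[of "1 / y" "ln y - ln x" "ln y"] by simp
  have llxy: "ln (ln x) \<le> ln (ln y)" using l1x x27 yx by simp
  have "inv_scale (Suc j) = 1 / (y * ln y * (ln (ln y))\<^sup>2)"
    unfolding inv_scale_def loglog_scale_def y_def ..
  also have "\<dots> \<le> 1 / (y * ln y * (ln (ln x) * ln (ln y)))"
  proof -
    have "ln (ln x) * ln (ln y) \<le> (ln (ln y))\<^sup>2"
      using llxy ll1x by (simp add: power2_eq_square mult_right_mono)
    moreover have "1 < ln y" using ll1y l1y by (smt (verit) ln_one)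
    ultimately show ?thesis
      using y27 ll1x by (intro divide_left_mono mult_left_mono) (auto intro!: mult_pos_pos)
  qed
  also have "\<dots> = (1 / (y * ln y)) / (ln (ln x) * ln (ln y))" by simp
  also have "\<dots> \<le> (ln (ln y) - ln (ln x)) / (ln (ln x) * ln (ln y))"
    using d2 ll1x ll1y by (intro divide_right_mono) auto
  also have "\<dots> = 1 / ln (ln x) - 1 / ln (ln y)" using ll1x ll1y by (simp add: field_simps)
  finally show ?thesis unfolding x_def y_def .
qed

lemma summable_inv_scale: "summable inv_scale"
proof -
  define h where "h i = 1 / ln (ln (real (i + 27)))" for i
  have "h \<longlonglongrightarrow> 0" unfolding h_def by real_asymp
  then have "summable (\<lambda>i. h i - h (Suc i))" by (rule telescope_summable')
  then have "summable (\<lambda>i. inv_scale (Suc (i + 27)))"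
  proof (rule summable_comparison_test')
    show "norm (inv_scale (Suc (i + 27))) \<le> h i - h (Suc i)" for i
      using inv_scale_Suc_le_telescoping[of "i + 27"] inv_scale_nonneg
      unfolding h_def by (simp add: add.commute)
  qed
  then show ?thesis by (subst summable_iff_shift[symmetric, of _ 28]) (simp add: add.commute)
qed

definition scale_tail :: "nat \<Rightarrow> real" where
  "scale_tail a = (\<Sum>i. inv_scale (i + a))"

lemma scale_tail_split:
  assumes "a \<le> b"
  shows "scale_tail a = (\<Sum>j\<in>{a..<b}. inv_scale j) + scale_tail b"
proof -
  have "summable (\<lambda>i. inv_scale (i + a))" using summable_inv_scale by (subst summable_iff_shift)
  then have "scale_tail a = (\<Sum>i. inv_scale (i + (b - a) + a)) + (\<Sum>i<b - a. inv_scale (i + a))"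
    unfolding scale_tail_def by (rule suminf_split_initial_segment)
  also have "(\<Sum>i<b - a. inv_scale (i + a)) = (\<Sum>j\<in>{a..<b}. inv_scale j)"
    using sum.shift_bounds_nat_ivl[of inv_scale 0 a "b - a"] assms by (simp add: atLeast0LessThan)
  finally show ?thesis using assms unfolding scale_tail_def by (simp add: add.assoc)
qed

lemma scale_tail_nonneg: "0 \<le> scale_tail a"
  unfolding scale_tail_def using summable_inv_scale inv_scale_nonneg
  by (intro suminf_nonneg) (auto simp: summable_iff_shift)

lemma scale_tail_antimono: "a \<le> b \<Longrightarrow> scale_tail b \<le> scale_tail a"
  using scale_tail_split[of a b] inv_scale_nonneg by (simp add: sum_nonneg)

lemma scale_tail_drop: "a < b \<Longrightarrow> scale_tail b + inv_scale a \<le> scale_tail a"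
  using scale_tail_split[of a b] inv_scale_nonneg by (simp add: member_le_sum)

section \<open>Jump rates of the block-counting process\<close>

definition merger_rate :: "(real \<Rightarrow> real) \<Rightarrow> nat \<Rightarrow> nat \<Rightarrow> real" where
  "merger_rate lam n k = real (n choose k) * lam_nk lam n k"

lemma lam_nk_nonneg:
  assumes "\<And>x. x \<in> {0..1} \<Longrightarrow> 0 \<le> lam x"
  shows "0 \<le> lam_nk lam n k"
  unfolding lam_nk_def set_lebesgue_integral_def
  by (intro Bochner_Integration.integral_nonneg) (auto simp: indicator_def intro!: assms mult_nonneg_nonneg)

lemma merger_rate_nonneg:
  assumes "\<And>x. x \<in> {0..1} \<Longrightarrow> 0 \<le> lam x"
  shows "0 \<le> merger_rate lam n k"
  unfolding merger_rate_def using lam_nk_nonneg[OF assms] by simp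

lemma set_integral_unit_interval_nonneg:
  fixes lam :: "real \<Rightarrow> real"
  assumes "\<And>x. x \<in> {0..1} \<Longrightarrow> 0 \<le> lam x"
  shows "0 \<le> set_lebesgue_integral lborel {0..1} lam"
  unfolding set_lebesgue_integral_def
  by (intro Bochner_Integration.integral_nonneg) (auto simp: indicator_def intro!: assms)

lemma choose_Suc_Suc_mult:
  "(Suc (Suc m) choose Suc (Suc i)) * (Suc (Suc i) * Suc i) = Suc (Suc m) * Suc m * (m choose i)"
  using Suc_times_binomial_eq[of "Suc m" "Suc i"] Suc_times_binomial_eq[of m i]
  by (metis mult.assoc mult.left_commute)

lemma binomial_second_factorial_moment:
  fixes x :: real
  shows "(\<Sum>k=2..n. real (n choose k) * (real k * (real k - 1)) * (x^(k-2) * (1-x)^(n-k)))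
    = real n * (real n - 1)"
proof (cases "n < 2")
  case True
  then have "n = 0 \<or> n = 1" by auto
  then show ?thesis by auto
next
  case False
  then obtain m where n: "n = m + 2" by (metis add.commute le_Suc_ex not_less)
  have coeff: "real (n choose (i + 2)) * (real (i + 2) * (real (i + 2) - 1))
      = real n * (real n - 1) * real (m choose i)" for i
    using arg_cong[OF choose_Suc_Suc_mult[of m i], of real] by (simp add: n algebra_simps)
  have "(\<Sum>k=2..n. real (n choose k) * (real k * (real k - 1)) * (x^(k-2) * (1-x)^(n-k)))
      = (\<Sum>i=0..m. real (n choose (i+2)) * (real (i+2) * (real (i+2) - 1))
          * (x^(i+2-2) * (1-x)^(n-(i+2))))"
  proof -
    have e: "{0+2..m+2} = {2..n}" using n by auto
    show ?thesis by (subst e[symmetric]) (rule sum.shift_bounds_cl_nat_ivl)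
  qed
  also have "\<dots> = real n * (real n - 1) * (\<Sum>i\<le>m. real (m choose i) * x^i * (1-x)^(m-i))"
    unfolding coeff sum_distrib_left atMost_atLeast0 by (intro sum.cong) (auto simp: n mult_ac)
  also have "(\<Sum>i\<le>m. real (m choose i) * x^i * (1-x)^(m-i)) = 1"
    using binomial_ring[of x "1 - x" m] by simp
  finally show ?thesis by simp
qed

lemma set_integrable_lam_nk_integrand:
  fixes lam :: "real \<Rightarrow> real"
  assumes lam_meas: "lam \<in> borel_measurable lborel"
    and lam_fin: "set_integrable lborel {0..1} lam"
  shows "set_integrable lborel {0..1} (\<lambda>x. x^(k-2) * (1-x)^(n-k) * lam x)"
proof (rule set_integrable_bound[OF lam_fin])
  show "set_borel_measurable lborel {0..1} (\<lambda>x. x^(k-2) * (1-x)^(n-k) * lam x)"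
    unfolding set_borel_measurable_def using lam_meas by measurable
  have "\<bar>x^(k-2) * (1-x)^(n-k)\<bar> * \<bar>lam x\<bar> \<le> 1 * \<bar>lam x\<bar>" if "x \<in> {0..1}" for x
    using that by (intro mult_right_mono) (auto simp: abs_mult intro!: mult_le_one power_le_one)
  then show "AE x in lborel. x \<in> {0..1} \<longrightarrow> norm (x^(k-2) * (1-x)^(n-k) * lam x) \<le> norm (lam x)"
    by (simp add: abs_mult)
qed

lemma sum_merger_rate_pairs:
  assumes lam_meas: "lam \<in> borel_measurable lborel"
    and lam_fin: "set_integrable lborel {0..1} lam"
  shows "(\<Sum>k=2..n. merger_rate lam n k * (real k * (real k - 1)))
    = real n * (real n - 1) * set_lebesgue_integral lborel {0..1} lam"
proof -
  define c where "c k = real (n choose k) * (real k * (real k - 1))" for k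
  define g where "g k x = x^(k-2) * (1-x)^(n-k) * lam x" for k x
  have int: "set_integrable lborel {0..1} (g k)" for k
    unfolding g_def by (rule set_integrable_lam_nk_integrand[OF lam_meas lam_fin])
  have "merger_rate lam n k * (real k * (real k - 1))
      = set_lebesgue_integral lborel {0..1} (\<lambda>x. c k * g k x)" for k
    unfolding set_integral_mult_right unfolding merger_rate_def lam_nk_def c_def g_def
    by (simp add: mult_ac)
  then have "(\<Sum>k=2..n. merger_rate lam n k * (real k * (real k - 1)))
      = (\<Sum>k=2..n. set_lebesgue_integral lborel {0..1} (\<lambda>x. c k * g k x))"
    by simp
  also have "\<dots> = set_lebesgue_integral lborel {0..1} (\<lambda>x. \<Sum>k=2..n. c k * g k x)"
    using int unfolding set_lebesgue_integral_def set_integrable_def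
    by (subst Bochner_Integration.integral_sum[symmetric]) (auto simp: sum_distrib_left mult_ac)
  also have "(\<lambda>x. \<Sum>k=2..n. c k * g k x) = (\<lambda>x. real n * (real n - 1) * lam x)"
  proof
    fix x
    have "(\<Sum>k=2..n. c k * g k x) = (\<Sum>k=2..n. real (n choose k) * (real k * (real k - 1))
        * (x^(k-2) * (1-x)^(n-k))) * lam x"
      unfolding c_def g_def sum_distrib_right by (simp add: mult_ac)
    then show "(\<Sum>k=2..n. c k * g k x) = real n * (real n - 1) * lam x"
      by (simp only: binomial_second_factorial_moment)
  qed
  finally show ?thesis by simp
qed

lemma N_rate_nonneg:
  assumes "\<And>x. x \<in> {0..1} \<Longrightarrow> 0 \<le> lam x" and "\<And>k. 1 \<le> k \<Longrightarrow> 0 \<le> mu k"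
  shows "0 \<le> N_rate lam mu n m"
  unfolding N_rate_def using lam_nk_nonneg[OF assms(1)] assms(2) by auto

lemma summable_N_rate_up:
  assumes mu_nonneg: "\<And>k. 1 \<le> k \<Longrightarrow> 0 \<le> mu k" and mu_fin: "summable (\<lambda>k. mu (Suc k))"
    and bd: "\<And>m. \<bar>\<phi> m\<bar> \<le> B"
  shows "summable (\<lambda>i. real n * mu (Suc i) * \<phi> (n + Suc i))"
proof (rule summable_comparison_test')
  show "summable (\<lambda>i. real n * B * mu (Suc i))" using mu_fin by (rule summable_mult)
  fix i :: nat
  have "\<bar>real n * mu (Suc i) * \<phi> (n + Suc i)\<bar> = real n * mu (Suc i) * \<bar>\<phi> (n + Suc i)\<bar>"
    using mu_nonneg[of "Suc i"] by (simp add: abs_mult)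
  also have "\<dots> \<le> real n * mu (Suc i) * B"
    using mu_nonneg[of "Suc i"] bd by (intro mult_left_mono) auto
  finally show "norm (real n * mu (Suc i) * \<phi> (n + Suc i)) \<le> real n * B * mu (Suc i)"
    by (simp add: mult_ac)
qed

lemma N_rate_sum_split:
  assumes mu_nonneg: "\<And>k. 1 \<le> k \<Longrightarrow> 0 \<le> mu k" and mu_fin: "summable (\<lambda>k. mu (Suc k))"
    and bd: "\<And>m. \<bar>\<phi> m\<bar> \<le> B"
  shows "summable (\<lambda>m. N_rate lam mu n m * \<phi> m)"
    and "(\<Sum>m. N_rate lam mu n m * \<phi> m) = (\<Sum>k=2..n. merger_rate lam n k * \<phi> (n - k + 1))
      + (\<Sum>i. real n * mu (Suc i) * \<phi> (n + Suc i))"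
proof -
  define f where "f m = N_rate lam mu n m * \<phi> m" for m
  have shift: "(\<lambda>i. f (i + Suc n)) = (\<lambda>i. real n * mu (Suc i) * \<phi> (n + Suc i))"
    unfolding f_def N_rate_def by (simp add: add.commute)
  have "summable (\<lambda>i. f (i + Suc n))"
    unfolding shift by (rule summable_N_rate_up[OF mu_nonneg mu_fin bd])
  then have sf: "summable f" by (rule summable_iff_shift[THEN iffD1])
  then show "summable (\<lambda>m. N_rate lam mu n m * \<phi> m)" unfolding f_def .
  have "sum f {..<Suc n} = sum f {1..<n}"
    by (rule sum.mono_neutral_right) (auto simp: f_def N_rate_def)
  also have "\<dots> = (\<Sum>k=2..n. merger_rate lam n k * \<phi> (n - k + 1))"
    by (rule sum.reindex_bij_witness[of _ "\<lambda>k. n - k + 1" "\<lambda>m. n - m + 1"])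
      (auto simp: f_def N_rate_def merger_rate_def)
  finally have "suminf f = (\<Sum>i. f (i + Suc n)) + (\<Sum>k=2..n. merger_rate lam n k * \<phi> (n - k + 1))"
    using suminf_split_initial_segment[OF sf, of "Suc n"] by simp
  then show "(\<Sum>m. N_rate lam mu n m * \<phi> m) = (\<Sum>k=2..n. merger_rate lam n k * \<phi> (n - k + 1))
      + (\<Sum>i. real n * mu (Suc i) * \<phi> (n + Suc i))"
    unfolding shift by (simp add: f_def[abs_def] add.commute)
qed

lemma summable_N_rate:
  assumes "\<And>k. 1 \<le> k \<Longrightarrow> 0 \<le> mu k" and "summable (\<lambda>k. mu (Suc k))"
  shows "summable (N_rate lam mu n)"
  using N_rate_sum_split(1)[OF assms, of "\<lambda>_. 1" 1] by simp

lemma total_rate_N_rate_0: "total_rate (N_rate lam mu) 0 = 0"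
proof -
  have "N_rate lam mu 0 = (\<lambda>_. 0)" by (auto simp: N_rate_def)
  then show ?thesis by (simp add: total_rate_def)
qed

section \<open>A Lyapunov function with negative drift\<close>

definition lyapunov :: "nat \<Rightarrow> nat \<Rightarrow> real" where
  "lyapunov N n = scale_tail (max n N)"

lemma lyapunov_nonneg: "0 \<le> lyapunov N n"
  unfolding lyapunov_def by (rule scale_tail_nonneg)

lemma lyapunov_le: "lyapunov N n \<le> scale_tail 0"
  unfolding lyapunov_def by (rule scale_tail_antimono) simp

lemma lyapunov_diff_abs_le: "\<bar>lyapunov N m - lyapunov N n\<bar> \<le> scale_tail 0"
  using lyapunov_nonneg[of N m] lyapunov_nonneg[of N n] lyapunov_le[of N m] lyapunov_le[of N n]
  by linarith

lemma lyapunov_up_step: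
  assumes N: "27 \<le> N" "N \<le> n"
  shows "lyapunov N (n + k) - lyapunov N n
    \<le> - real k * inv_scale n + 4 * (real k)\<^sup>2 / real n * inv_scale n"
proof -
  have "lyapunov N (n + k) - lyapunov N n = - (\<Sum>j\<in>{n..<n+k}. inv_scale j)"
    using scale_tail_split[of n "n + k"] N unfolding lyapunov_def by simp
  also have "\<dots> \<le> - (\<Sum>j\<in>{n..<n+k}. inv_scale n * (1 - 4 * real k / real n))"
  proof -
    have "inv_scale n * (1 - 4 * real k / real n) \<le> inv_scale j" if j: "j \<in> {n..<n+k}" for j
    proof -
      have "inv_scale n * (1 - 4 * real k / real n) \<le> inv_scale n * (1 - 4 * (real j - real n) / real n)"
        using j inv_scale_nonneg[of n] N by (intro mult_left_mono) (auto simp: divide_right_mono)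
      also have "\<dots> \<le> inv_scale j" using j inv_scale_lower[of n j] N by auto
      finally show ?thesis .
    qed
    then have "(\<Sum>j\<in>{n..<n+k}. inv_scale n * (1 - 4 * real k / real n)) \<le> (\<Sum>j\<in>{n..<n+k}. inv_scale j)"
      by (rule sum_mono)
    then show ?thesis by linarith
  qed
  also have "\<dots> = - real k * inv_scale n + 4 * (real k)\<^sup>2 / real n * inv_scale n"
    by (simp add: field_simps power2_eq_square)
  finally show ?thesis .
qed

lemma fragmentation_drift_bound:
  fixes mu :: "nat \<Rightarrow> real"
  assumes mu_nonneg: "\<And>k. 1 \<le> k \<Longrightarrow> 0 \<le> mu k" and mu_fin: "summable (\<lambda>k. mu (Suc k))"
    and N: "27 \<le> N" "N \<le> n"
  shows "(\<Sum>i. real n * mu (Suc i) * (lyapunov N (n + Suc i) - lyapunov N n))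
    \<le> - inv_scale n * Phi_mu mu n + 4 * inv_scale n * (\<Sum>k=1..n. (real k)\<^sup>2 * mu k)"
proof -
  define f where "f i = real n * mu (Suc i) * (lyapunov N (n + Suc i) - lyapunov N n)" for i
  have sf: "summable f"
    unfolding f_def by (rule summable_N_rate_up[OF mu_nonneg mu_fin lyapunov_diff_abs_le])
  have f_nonpos: "f i \<le> 0" for i
  proof -
    have "lyapunov N (n + Suc i) \<le> lyapunov N n"
      unfolding lyapunov_def using N by (intro scale_tail_antimono) auto
    then show ?thesis unfolding f_def using mu_nonneg[of "Suc i"] by (simp add: mult_nonneg_nonpos)
  qed
  have "(\<Sum>i<n. - f i) \<le> (\<Sum>i. - f i)"
    using sf f_nonpos by (intro sum_le_suminf summable_minus) auto
  then have "suminf f \<le> sum f {..<n}" using suminf_minus[OF sf] by (simp add: sum_negf)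
  also have "\<dots> \<le> (\<Sum>i<n. real n * mu (Suc i)
      * (- real (Suc i) * inv_scale n + 4 * (real (Suc i))\<^sup>2 / real n * inv_scale n))"
    unfolding f_def using mu_nonneg N
    by (intro sum_mono mult_left_mono lyapunov_up_step) auto
  also have "\<dots> = (\<Sum>k=1..n. real n * mu k
      * (- real k * inv_scale n + 4 * (real k)\<^sup>2 / real n * inv_scale n))"
    by (simp only: One_nat_def sum.atLeast1_atMost_eq)
  also have "\<dots> = (\<Sum>k=1..n. - inv_scale n * (real n * (real k * mu k))
      + 4 * inv_scale n * ((real k)\<^sup>2 * mu k))"
    using N by (intro sum.cong refl) (simp add: field_simps)
  also have "\<dots> = - inv_scale n * Phi_mu mu n + 4 * inv_scale n * (\<Sum>k=1..n. (real k)\<^sup>2 * mu k)"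
    unfolding Phi_mu_def sum.distrib sum_negf sum_distrib_left by simp
  finally show ?thesis unfolding f_def .
qed

lemma lyapunov_down_step:
  assumes n: "N \<le> n" "54 \<le> n" and d: "2 * d \<le> n"
  shows "lyapunov N (n - d) - lyapunov N n \<le> real d * inv_scale n * (1 + 30 * real d / real n)"
proof -
  have "lyapunov N (n - d) - lyapunov N n = (\<Sum>j\<in>{max (n - d) N..<n}. inv_scale j)"
    using scale_tail_split[of "max (n - d) N" n] n unfolding lyapunov_def by simp
  also have "\<dots> \<le> (\<Sum>j\<in>{n - d..<n}. inv_scale j)"
    by (rule sum_mono2) (auto simp: inv_scale_nonneg)
  also have "\<dots> \<le> (\<Sum>j\<in>{n - d..<n}. inv_scale n * (1 + 30 * real d / real n))"
  proof (rule sum_mono)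
    fix j assume j: "j \<in> {n - d..<n}"
    have "inv_scale j \<le> inv_scale n * (1 + 30 * (real n - real j) / real n)"
      using inv_scale_upper[of j n] j n d by auto
    also have "\<dots> \<le> inv_scale n * (1 + 30 * real d / real n)"
      using j n inv_scale_nonneg[of n] by (intro mult_left_mono) (auto simp: divide_right_mono)
    finally show "inv_scale j \<le> inv_scale n * (1 + 30 * real d / real n)" .
  qed
  also have "\<dots> = real d * inv_scale n * (1 + 30 * real d / real n)"
    using d by simp
  finally show ?thesis .
qed

text \<open>Mergers of at most \<open>n/2 + 1\<close> blocks are handled to first order; for larger ones
  the increment is bounded by the oscillation of the Lyapunov function, which is
  \<open>O(k\<^sup>2/n\<^sup>2)\<close>.\<close>

lemma lyapunov_down_increment:
  assumes n: "N \<le> n" "54 \<le> n" and k: "2 \<le> k" "k \<le> n"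
  shows "lyapunov N (n - k + 1) - lyapunov N n
    \<le> (real k - 1) * inv_scale n
      + (30 * inv_scale n / real n + 4 * scale_tail 0 / (real n)\<^sup>2) * (real k * (real k - 1))"
proof -
  have c0: "0 \<le> 30 * inv_scale n / real n" "0 \<le> 4 * scale_tail 0 / (real n)\<^sup>2"
    using inv_scale_nonneg scale_tail_nonneg by auto
  have kk: "0 \<le> real k * (real k - 1)" using k by simp
  show ?thesis
  proof (cases "2 * (k - 1) \<le> n")
    case True
    have "lyapunov N (n - k + 1) - lyapunov N n
        \<le> real (k - 1) * inv_scale n * (1 + 30 * real (k - 1) / real n)"
      using lyapunov_down_step[OF n True] k by (simp add: Suc_diff_le)
    also have "\<dots> = (real k - 1) * inv_scale n + 30 * inv_scale n / real n * ((real k - 1) * (real k - 1))"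
      using k by (simp add: of_nat_diff field_simps)
    also have "\<dots> \<le> (real k - 1) * inv_scale n + 30 * inv_scale n / real n * (real k * (real k - 1))"
      using k c0 by (intro add_left_mono mult_left_mono mult_right_mono) auto
    finally show ?thesis using mult_nonneg_nonneg[OF c0(2) kk] by (simp add: distrib_right)
  next
    case False
    then have "n \<le> 2 * (k - 1)" by simp
    then have "real n \<le> real (2 * (k - 1))" by (simp only: of_nat_le_iff)
    then have "real n \<le> 2 * (real k - 1)" using k by (simp add: of_nat_diff)
    then have "(real n)\<^sup>2 \<le> (2 * (real k - 1))\<^sup>2" by (intro power_mono) auto
    also have "\<dots> \<le> 4 * (real k * (real k - 1))" using k by (simp add: power2_eq_square field_simps)
    finally have "(real n)\<^sup>2 \<le> 4 * (real k * (real k - 1))" .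
    then have "1 \<le> 4 * (real k * (real k - 1)) / (real n)\<^sup>2" using n by simp
    then have "scale_tail 0 * 1 \<le> scale_tail 0 * (4 * (real k * (real k - 1)) / (real n)\<^sup>2)"
      using scale_tail_nonneg[of 0] by (intro mult_left_mono) auto
    then have "scale_tail 0 \<le> 4 * scale_tail 0 / (real n)\<^sup>2 * (real k * (real k - 1))"
      by (simp add: mult_ac)
    moreover have "lyapunov N (n - k + 1) - lyapunov N n \<le> scale_tail 0"
      using lyapunov_diff_abs_le by (metis abs_le_D1)
    moreover have "0 \<le> (real k - 1) * inv_scale n" using k inv_scale_nonneg[of n] by simp
    ultimately show ?thesis unfolding distrib_right using mult_nonneg_nonneg[OF c0(1) kk] by linarith
  qed
qed

lemma coalescence_drift_bound:
  assumes lam_meas: "lam \<in> borel_measurable lborel"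
    and lam_nonneg: "\<And>x. x \<in> {0..1} \<Longrightarrow> 0 \<le> lam x"
    and lam_fin: "set_integrable lborel {0..1} lam"
    and n: "N \<le> n" "54 \<le> n"
  shows "(\<Sum>k=2..n. merger_rate lam n k * (lyapunov N (n - k + 1) - lyapunov N n))
    \<le> inv_scale n * Phi_Lambda lam n + (30 + 4 * scale_tail 0) * set_lebesgue_integral lborel {0..1} lam"
proof -
  define I where "I = set_lebesgue_integral lborel {0..1} lam"
  define c where "c = 30 * inv_scale n / real n + 4 * scale_tail 0 / (real n)\<^sup>2"
  have I0: "0 \<le> I" unfolding I_def by (rule set_integral_unit_interval_nonneg[OF lam_nonneg])
  have c0: "0 \<le> c" unfolding c_def using inv_scale_nonneg scale_tail_nonneg by auto
  have bound: "c * (real n * (real n - 1)) \<le> 30 + 4 * scale_tail 0"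
  proof -
    have "c * (real n * (real n - 1)) \<le> c * (real n * real n)" using c0 n by (intro mult_left_mono) auto
    also have "\<dots> = 30 * (real n * inv_scale n) + 4 * scale_tail 0"
      unfolding c_def using n by (simp add: field_simps power2_eq_square)
    also have "\<dots> \<le> 30 + 4 * scale_tail 0" using n_inv_scale_le_1[of n] n by simp
    finally show ?thesis .
  qed
  have "(\<Sum>k=2..n. merger_rate lam n k * (lyapunov N (n - k + 1) - lyapunov N n))
      \<le> (\<Sum>k=2..n. merger_rate lam n k * ((real k - 1) * inv_scale n + c * (real k * (real k - 1))))"
    unfolding c_def using n
    by (intro sum_mono mult_left_mono lyapunov_down_increment merger_rate_nonneg lam_nonneg) auto
  also have "\<dots> = inv_scale n * Phi_Lambda lam n + c * (\<Sum>k=2..n. merger_rate lam n k * (real k * (real k - 1)))"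
    unfolding Phi_Lambda_def merger_rate_def
    by (simp add: sum.distrib sum_distrib_left distrib_left mult_ac)
  also have "\<dots> = inv_scale n * Phi_Lambda lam n + c * (real n * (real n - 1)) * I"
    unfolding I_def sum_merger_rate_pairs[OF lam_meas lam_fin] by (simp add: mult_ac)
  also have "\<dots> \<le> inv_scale n * Phi_Lambda lam n + (30 + 4 * scale_tail 0) * I"
    using bound I0 by (intro add_left_mono mult_right_mono)
  finally show ?thesis unfolding I_def .
qed

lemma mu_eventually_le_log:
  fixes mu :: "nat \<Rightarrow> real" and b \<alpha> :: real
  assumes b: "b > 0" and a1: "\<alpha> \<le> 1"
    and equiv: "(\<lambda>n. mu n) \<sim>[at_top] (\<lambda>n. b * ln (real n) powr \<alpha> / (real n)\<^sup>2)"
  shows "\<exists>K. \<forall>k\<ge>K. 0 < mu k \<and> (real k)\<^sup>2 * mu k \<le> 2 * b * ln (real k)"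
proof -
  define g where "g n = b * ln (real n) powr \<alpha> / (real n)\<^sup>2" for n :: nat
  have g_pos: "eventually (\<lambda>k. 0 < g k) at_top"
    using eventually_ge_at_top[of "3::nat"]
  proof eventually_elim
    case (elim k)
    then have "0 < ln (real k)" by simp
    then show ?case unfolding g_def using b elim by simp
  qed
  moreover have "((\<lambda>k. mu k / g k) \<longlongrightarrow> 1) at_top"
  proof (rule asymp_equivD_strong)
    show "(\<lambda>k. mu k) \<sim>[at_top] g" unfolding g_def[abs_def] by (rule equiv)
    show "eventually (\<lambda>k. mu k \<noteq> 0 \<or> g k \<noteq> 0) at_top" using g_pos by eventually_elim simp
  qed
  then have "eventually (\<lambda>k. 1/2 < mu k / g k \<and> mu k / g k < 2) at_top"
    by (intro eventually_conj order_tendstoD) auto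
  ultimately have "eventually (\<lambda>k. 0 < mu k \<and> (real k)\<^sup>2 * mu k \<le> 2 * b * ln (real k)) at_top"
    using eventually_ge_at_top[of "27::nat"]
  proof eventually_elim
    case (elim k)
    then have mu_pos: "0 < mu k" and "mu k \<le> 2 * g k" by (auto simp: field_simps)
    then have "(real k)\<^sup>2 * mu k \<le> 2 * b * ln (real k) powr \<alpha>"
      using elim(3) unfolding g_def by (simp add: field_simps)
    also have "\<dots> \<le> 2 * b * ln (real k)"
      using ln_ln_ge_1(1)[of "real k"] elim(3) a1 b powr_mono[of \<alpha> 1 "ln (real k)"] by simp
    finally show ?case using mu_pos by simp
  qed
  then show ?thesis by (simp add: eventually_at_top_linorder)
qed

lemma second_moment_bound:
  fixes mu :: "nat \<Rightarrow> real"
  assumes K: "\<And>k. K \<le> k \<Longrightarrow> (real k)\<^sup>2 * mu k \<le> 2 * b * ln (real k)"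
    and b: "0 \<le> b" and n: "1 \<le> n"
  shows "(\<Sum>k=1..n. (real k)\<^sup>2 * mu k) \<le> (\<Sum>k<K. (real k)\<^sup>2 * \<bar>mu k\<bar>) + 2 * b * real n * ln (real n)"
proof -
  have "(real k)\<^sup>2 * mu k \<le> (if k < K then (real k)\<^sup>2 * \<bar>mu k\<bar> else 0) + 2 * b * ln (real n)"
    if k: "k \<in> {1..n}" for k
  proof (cases "k < K")
    case True
    have "(real k)\<^sup>2 * mu k \<le> (real k)\<^sup>2 * \<bar>mu k\<bar>" by (intro mult_left_mono) auto
    moreover have "0 \<le> 2 * b * ln (real n)" using n b by simp
    ultimately show ?thesis using True by simp
  next
    case False
    then have "(real k)\<^sup>2 * mu k \<le> 2 * b * ln (real k)" using K by simp
    also have "\<dots> \<le> 2 * b * ln (real n)" using k b by (intro mult_left_mono) auto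
    finally show ?thesis using False by simp
  qed
  then have "(\<Sum>k=1..n. (real k)\<^sup>2 * mu k)
      \<le> (\<Sum>k=1..n. (if k < K then (real k)\<^sup>2 * \<bar>mu k\<bar> else 0) + 2 * b * ln (real n))"
    by (rule sum_mono)
  also have "\<dots> = (\<Sum>k=1..n. (if k < K then (real k)\<^sup>2 * \<bar>mu k\<bar> else 0)) + real n * (2 * b * ln (real n))"
    by (simp add: sum.distrib)
  also have "(\<Sum>k=1..n. (if k < K then (real k)\<^sup>2 * \<bar>mu k\<bar> else 0)) \<le> (\<Sum>k<K. (real k)\<^sup>2 * \<bar>mu k\<bar>)"
    by (simp add: sum.inter_filter[symmetric]) (intro sum_mono2, auto)
  finally show ?thesis by (simp add: mult_ac)
qed

lemma inv_scale_second_moment_le: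
  fixes mu :: "nat \<Rightarrow> real"
  assumes K: "\<And>k. K \<le> k \<Longrightarrow> (real k)\<^sup>2 * mu k \<le> 2 * b * ln (real k)"
    and b: "0 \<le> b" and n: "27 \<le> n"
  shows "inv_scale n * (\<Sum>k=1..n. (real k)\<^sup>2 * mu k) \<le> (\<Sum>k<K. (real k)\<^sup>2 * \<bar>mu k\<bar>) + 2 * b"
proof -
  define M where "M = (\<Sum>k<K. (real k)\<^sup>2 * \<bar>mu k\<bar>)"
  have "inv_scale n * (\<Sum>k=1..n. (real k)\<^sup>2 * mu k) \<le> inv_scale n * (M + 2 * b * real n * ln (real n))"
    unfolding M_def using K b n inv_scale_nonneg[of n] by (intro mult_left_mono second_moment_bound) auto
  also have "\<dots> = inv_scale n * M + 2 * b * (real n * ln (real n) * inv_scale n)"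
    by (simp add: algebra_simps)
  also have "\<dots> \<le> M + 2 * b"
  proof -
    have "inv_scale n * M \<le> M"
      using inv_scale_le_1[OF n] inv_scale_nonneg unfolding M_def by (simp add: mult_left_le_one_le sum_nonneg)
    moreover have "b * (real n * ln (real n) * inv_scale n) \<le> b"
      using n_ln_n_inv_scale_le_1[OF n] b by (simp add: mult_left_le)
    ultimately show ?thesis by linarith
  qed
  finally show ?thesis unfolding M_def .
qed

lemma lyapunov_drift_large:
  assumes lam_meas: "lam \<in> borel_measurable lborel"
    and lam_nonneg: "\<And>x. x \<in> {0..1} \<Longrightarrow> 0 \<le> lam x"
    and lam_fin: "set_integrable lborel {0..1} lam"
    and mu_nonneg: "\<And>k. 1 \<le> k \<Longrightarrow> 0 \<le> mu k" and mu_fin: "summable (\<lambda>k. mu (Suc k))"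
    and N: "54 \<le> N" "N \<le> n"
  shows "(\<Sum>m. N_rate lam mu n m * (lyapunov N m - lyapunov N n))
    \<le> inv_scale n * Phi_Lambda lam n - inv_scale n * Phi_mu mu n
      + 4 * inv_scale n * (\<Sum>k=1..n. (real k)\<^sup>2 * mu k)
      + (30 + 4 * scale_tail 0) * set_lebesgue_integral lborel {0..1} lam"
proof -
  have "(\<Sum>m. N_rate lam mu n m * (lyapunov N m - lyapunov N n))
      = (\<Sum>k=2..n. merger_rate lam n k * (lyapunov N (n - k + 1) - lyapunov N n))
        + (\<Sum>i. real n * mu (Suc i) * (lyapunov N (n + Suc i) - lyapunov N n))"
    by (rule N_rate_sum_split(2)[OF mu_nonneg mu_fin lyapunov_diff_abs_le])
  moreover have "(\<Sum>k=2..n. merger_rate lam n k * (lyapunov N (n - k + 1) - lyapunov N n))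
      \<le> inv_scale n * Phi_Lambda lam n + (30 + 4 * scale_tail 0) * set_lebesgue_integral lborel {0..1} lam"
    using N by (intro coalescence_drift_bound[OF lam_meas lam_nonneg lam_fin]) auto
  moreover have "(\<Sum>i. real n * mu (Suc i) * (lyapunov N (n + Suc i) - lyapunov N n))
      \<le> - inv_scale n * Phi_mu mu n + 4 * inv_scale n * (\<Sum>k=1..n. (real k)\<^sup>2 * mu k)"
    using N by (intro fragmentation_drift_bound[OF mu_nonneg mu_fin]) auto
  ultimately show ?thesis by linarith
qed

text \<open>Below \<open>N\<close> the Lyapunov function is constant, so only fragmentations overshooting
  \<open>N\<close> contribute.\<close>

lemma lyapunov_drift_small:
  assumes mu_nonneg: "\<And>k. 1 \<le> k \<Longrightarrow> 0 \<le> mu k" and mu_fin: "summable (\<lambda>k. mu (Suc k))"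
    and n: "1 \<le> n" "n < N"
  shows "(\<Sum>m. N_rate lam mu n m * (lyapunov N m - lyapunov N n)) \<le> - mu (Suc N) * inv_scale N"
proof -
  define f where "f i = real n * mu (Suc i) * (lyapunov N (n + Suc i) - lyapunov N n)" for i
  have sf: "summable f"
    unfolding f_def by (rule summable_N_rate_up[OF mu_nonneg mu_fin lyapunov_diff_abs_le])
  have f_nonpos: "f i \<le> 0" for i
  proof -
    have "lyapunov N (n + Suc i) \<le> lyapunov N n"
      unfolding lyapunov_def by (intro scale_tail_antimono) auto
    then show ?thesis unfolding f_def using mu_nonneg[of "Suc i"] by (simp add: mult_nonneg_nonpos)
  qed
  have down_zero: "(\<Sum>k=2..n. merger_rate lam n k * (lyapunov N (n - k + 1) - lyapunov N n)) = 0"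
    using n by (intro sum.neutral) (auto simp: lyapunov_def max_def)
  have "(\<Sum>m. N_rate lam mu n m * (lyapunov N m - lyapunov N n))
      = (\<Sum>k=2..n. merger_rate lam n k * (lyapunov N (n - k + 1) - lyapunov N n)) + suminf f"
    unfolding f_def by (rule N_rate_sum_split(2)[OF mu_nonneg mu_fin lyapunov_diff_abs_le])
  also have "\<dots> = suminf f" by (simp only: down_zero add_0)
  also have "\<dots> \<le> f N"
  proof -
    have "(\<Sum>i\<in>{N}. - f i) \<le> (\<Sum>i. - f i)"
      using sf f_nonpos by (intro sum_le_suminf summable_minus) auto
    then show ?thesis using suminf_minus[OF sf] by simp
  qed
  also have "\<dots> \<le> real n * mu (Suc N) * (- inv_scale N)"
  proof -
    have "lyapunov N (n + Suc N) + inv_scale N \<le> lyapunov N n"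
      using scale_tail_drop[of N "n + Suc N"] n unfolding lyapunov_def by (simp add: max_def)
    then show ?thesis unfolding f_def using mu_nonneg[of "Suc N"] by (intro mult_left_mono) auto
  qed
  also have "\<dots> \<le> 1 * mu (Suc N) * (- inv_scale N)"
    using n mu_nonneg[of "Suc N"] inv_scale_nonneg[of N]
    by (intro mult_right_mono_neg mult_right_mono) auto
  finally show ?thesis by simp
qed

lemma N_rate_lyapunov_drift:
  fixes lam :: "real \<Rightarrow> real" and mu :: "nat \<Rightarrow> real" and b \<alpha> :: real
  assumes lam_meas: "lam \<in> borel_measurable lborel"
    and lam_nonneg: "\<And>x. x \<in> {0..1} \<Longrightarrow> 0 \<le> lam x"
    and lam_fin: "set_integrable lborel {0..1} lam"
    and mu_nonneg: "\<And>k. 1 \<le> k \<Longrightarrow> 0 \<le> mu k" and mu_fin: "summable (\<lambda>k. mu (Suc k))"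
    and C1: "b > 0" "\<alpha> \<le> 1"
      "(\<lambda>n. mu n) \<sim>[at_top] (\<lambda>n. b * ln (real n) powr \<alpha> / (real n)\<^sup>2)"
    and lim: "limsup (\<lambda>n. ereal ((Phi_Lambda lam n - Phi_mu mu n) /
                 (real n * ln (real n) * (ln (ln (real n)))\<^sup>2))) = -\<infinity>"
  shows "\<exists>g \<epsilon> G. 0 < \<epsilon> \<and> (\<forall>n. 0 \<le> g n \<and> g n \<le> G) \<and>
    (\<forall>n\<ge>1. (\<Sum>m. N_rate lam mu n m * (g m - g n)) \<le> - \<epsilon>)"
proof -
  obtain K where K: "\<And>k. K \<le> k \<Longrightarrow> 0 < mu k \<and> (real k)\<^sup>2 * mu k \<le> 2 * b * ln (real k)"
    using mu_eventually_le_log[OF C1] by blast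
  define M where "M = (\<Sum>k<K. (real k)\<^sup>2 * \<bar>mu k\<bar>)"
  define B where "B = 4 * M + 8 * b + (30 + 4 * scale_tail 0) * set_lebesgue_integral lborel {0..1} lam"
  have "limsup (\<lambda>n. ereal ((Phi_Lambda lam n - Phi_mu mu n) / loglog_scale (real n))) < ereal (- (B + 1))"
    using lim unfolding loglog_scale_def by simp
  then have "eventually (\<lambda>n. (Phi_Lambda lam n - Phi_mu mu n) / loglog_scale (real n) < - (B + 1)) sequentially"
    by (auto dest: Limsup_lessD)
  then obtain N1 where N1: "\<And>n. N1 \<le> n \<Longrightarrow>
      inv_scale n * Phi_Lambda lam n - inv_scale n * Phi_mu mu n < - (B + 1)"
    unfolding eventually_sequentially inv_scale_def by (auto simp: diff_divide_distrib)
  define N where "N = max (max N1 K) 54"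
  define \<epsilon> where "\<epsilon> = min 1 (mu (Suc N) * inv_scale N)"
  have "0 < mu (Suc N)" using K[of "Suc N"] unfolding N_def by auto
  then have eps: "0 < \<epsilon>" unfolding \<epsilon>_def N_def using inv_scale_pos by auto
  have "(\<Sum>m. N_rate lam mu n m * (lyapunov N m - lyapunov N n)) \<le> - \<epsilon>" if n: "1 \<le> n" for n
  proof (cases "N \<le> n")
    case True
    have "inv_scale n * (\<Sum>k=1..n. (real k)\<^sup>2 * mu k) \<le> M + 2 * b"
      unfolding M_def using True K C1(1) by (intro inv_scale_second_moment_le) (auto simp: N_def)
    moreover have "54 \<le> N" "N1 \<le> n" using True unfolding N_def by auto
    moreover have "\<epsilon> \<le> 1" unfolding \<epsilon>_def by simp
    ultimately show ?thesis
      using lyapunov_drift_large[OF lam_meas lam_nonneg lam_fin mu_nonneg mu_fin _ True] N1[of n]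
      unfolding B_def by linarith
  next
    case False
    then show ?thesis
      using lyapunov_drift_small[OF mu_nonneg mu_fin n, of N lam] unfolding \<epsilon>_def by simp
  qed
  then show ?thesis using eps lyapunov_nonneg lyapunov_le by blast
qed

section \<open>Jump-hold processes with negative drift\<close>

lemma erlang_CDF_0_1: "erlang_CDF 0 1 s = (if s \<le> 0 then 0 else 1 - exp (- s))"
  by (auto simp: erlang_CDF_def)

lemma erlang_CDF_0_1_tendsto: "(\<lambda>T::nat. erlang_CDF 0 1 (real T)) \<longlonglongrightarrow> 1"
  unfolding erlang_CDF_def by simp real_asymp

lemma (in finite_measure) measure_eq_lim_incseq:
  assumes "incseq S" "\<And>T. S T \<in> sets M" "(\<Union>T. S T) = X" "(\<lambda>T. measure M (S T)) \<longlonglongrightarrow> c"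
  shows "measure M X = c"
proof -
  have "(\<lambda>T. measure M (S T)) \<longlonglongrightarrow> measure M (\<Union>T. S T)"
    using assms(1,2) by (intro Lim_measure_incseq) auto
  then show ?thesis using assms(3,4) by (metis LIMSEQ_unique)
qed

lemma (in prob_space) nn_integral_exponential_on:
  fixes E :: "'a \<Rightarrow> real"
  assumes [measurable]: "E \<in> borel_measurable M" "A \<in> sets M"
    and cdf: "\<And>a. emeasure M (A \<inter> {x \<in> space M. E x \<le> a}) = emeasure M A * erlang_CDF 0 1 a"
  shows "(\<integral>\<^sup>+x. ennreal (E x) * indicator A x \<partial>M) = emeasure M A"
proof (cases "emeasure M A = 0")
  case True
  then have "AE x in M. x \<notin> A" by (intro AE_not_in) (simp add: null_sets_def)
  then have "AE x in M. ennreal (E x) * indicator A x = 0" by eventually_elim simp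
  then have "(\<integral>\<^sup>+x. ennreal (E x) * indicator A x \<partial>M) = (\<integral>\<^sup>+x. 0 \<partial>M)"
    by (rule nn_integral_cong_AE)
  then show ?thesis using True by simp
next
  case False
  \<comment> \<open>Conditioned on \<open>A\<close>, \<open>E\<close> is exponential with mean 1.\<close>
  have "distributed (uniform_measure M A) lborel E (erlang_density 0 1)"
  proof (rule erlang_distributedI)
    fix a :: real
    have "emeasure (uniform_measure M A) {x \<in> space M. E x \<le> a}
        = emeasure M (A \<inter> {x \<in> space M. E x \<le> a}) / emeasure M A"
      by (subst emeasure_uniform_measure) auto
    also have "\<dots> = ennreal (erlang_CDF 0 1 a) * emeasure M A / emeasure M A"
      by (simp add: cdf mult.commute)
    also have "\<dots> = ennreal (erlang_CDF 0 1 a)"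
      using False emeasure_finite[of A] by (rule ennreal_mult_divide_eq)
    finally show "emeasure (uniform_measure M A) {x \<in> space (uniform_measure M A). E x \<le> a}
        = ennreal (erlang_CDF 0 1 a)" by simp
  qed auto
  then have "(\<integral>\<^sup>+x. ennreal (E x) \<partial>uniform_measure M A)
      = (\<integral>\<^sup>+x. ennreal (erlang_density 0 1 x * x ^ 1) \<partial>lborel)"
    by (subst distributed_nn_integral[symmetric]) (auto intro!: nn_integral_cong simp: ennreal_mult')
  also have "\<dots> = 1" by (subst nn_integral_erlang_ith_moment) auto
  finally show ?thesis
    by (subst (asm) nn_integral_uniform_measure) (auto simp: divide_eq_1_ennreal)
qed

lemma suminf_ennreal_commute: "(\<Sum>i. \<Sum>j. f i j) = (\<Sum>j. \<Sum>i. (f i j :: ennreal))"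
proof -
  have "(\<Sum>i. \<Sum>j. f i j) = (\<Sum>i. \<integral>\<^sup>+j. f i j \<partial>count_space UNIV)"
    by (simp add: nn_integral_count_space_nat)
  also have "\<dots> = (\<integral>\<^sup>+j. (\<Sum>i. f i j) \<partial>count_space UNIV)"
    by (rule nn_integral_suminf[symmetric]) simp
  also have "\<dots> = (\<Sum>j. \<Sum>i. f i j)"
    by (simp add: nn_integral_count_space_nat)
  finally show ?thesis .
qed

locale jump_hold =
  fixes r :: "nat \<Rightarrow> nat \<Rightarrow> real" and n0 :: nat and M :: "'a measure"
    and Y :: "nat \<Rightarrow> 'a \<Rightarrow> nat" and E :: "nat \<Rightarrow> 'a \<Rightarrow> real"
  assumes process: "jump_hold_process r n0 M Y E"
    and rate_nonneg: "\<And>n m. 0 \<le> r n m"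
    and rate_summable: "\<And>n. summable (r n)"
begin

sublocale prob_space M
  using process unfolding jump_hold_process_def by blast

lemma measurable_Y [measurable]: "Y k \<in> measurable M (count_space UNIV)"
  using process unfolding jump_hold_process_def by blast

lemma measurable_E [measurable]: "E k \<in> borel_measurable M"
  using process unfolding jump_hold_process_def by blast

lemma total_rate_nonneg: "0 \<le> total_rate r n"
  unfolding total_rate_def using rate_summable rate_nonneg by (rule suminf_nonneg)

definition path_prob :: "nat \<Rightarrow> (nat \<Rightarrow> nat) \<Rightarrow> real" where
  "path_prob k y = (if y 0 = n0 then 1 else 0) * (\<Prod>i<k. r (y i) (y (Suc i)) / total_rate r (y i))"

lemma measure_path_holding:
  "measure M {x \<in> space M. \<forall>i\<le>k. Y i x = y i \<and> E i x \<le> t i}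
    = path_prob k y * (\<Prod>i\<le>k. erlang_CDF 0 1 (t i))"
  using process unfolding jump_hold_process_def path_prob_def erlang_CDF_0_1 by auto

lemma measure_path_last_holding:
  "measure M {x \<in> space M. (\<forall>i\<le>k. Y i x = y i) \<and> E k x \<le> s} = path_prob k y * erlang_CDF 0 1 s"
proof (rule measure_eq_lim_incseq)
  define S where "S T = {x \<in> space M. \<forall>i\<le>k. Y i x = y i \<and> E i x \<le> (if i = k then s else real T)}"
    for T :: nat
  show "incseq S" unfolding S_def incseq_def by (auto simp: split: if_splits)
  show "S T \<in> sets M" for T unfolding S_def by measurable
  show "(\<Union>T. S T) = {x \<in> space M. (\<forall>i\<le>k. Y i x = y i) \<and> E k x \<le> s}"
  proof (intro equalityI subsetI)
    fix x assume x: "x \<in> {x \<in> space M. (\<forall>i\<le>k. Y i x = y i) \<and> E k x \<le> s}"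
    define T where "T = nat \<lceil>\<Sum>i\<le>k. \<bar>E i x\<bar>\<rceil>"
    have "E i x \<le> real T" if "i \<le> k" for i
    proof -
      have "E i x \<le> (\<Sum>i\<le>k. \<bar>E i x\<bar>)"
        using that member_le_sum[of i "{..k}" "\<lambda>i. \<bar>E i x\<bar>"] by simp
      then show ?thesis unfolding T_def by linarith
    qed
    then show "x \<in> (\<Union>T. S T)" using x unfolding S_def by (intro UN_I[of T]) auto
  qed (auto simp: S_def)
  have "measure M (S T) = path_prob k y * erlang_CDF 0 1 s * erlang_CDF 0 1 (real T) ^ k" for T
  proof -
    have "(\<Prod>i\<le>k. erlang_CDF 0 1 (if i = k then s else real T))
        = erlang_CDF 0 1 s * (\<Prod>i<k. erlang_CDF 0 1 (real T))"
      by (simp add: lessThan_Suc_atMost[symmetric] prod.lessThan_Suc)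
    then show ?thesis unfolding S_def measure_path_holding by simp
  qed
  moreover have "(\<lambda>T. path_prob k y * erlang_CDF 0 1 s * erlang_CDF 0 1 (real T) ^ k)
      \<longlonglongrightarrow> path_prob k y * erlang_CDF 0 1 s * 1 ^ k"
    by (intro tendsto_intros erlang_CDF_0_1_tendsto)
  ultimately show "(\<lambda>T. measure M (S T)) \<longlonglongrightarrow> path_prob k y * erlang_CDF 0 1 s" by simp
qed

lemma measure_path: "measure M {x \<in> space M. \<forall>i\<le>k. Y i x = y i} = path_prob k y"
proof (rule measure_eq_lim_incseq)
  define S where "S T = {x \<in> space M. (\<forall>i\<le>k. Y i x = y i) \<and> E k x \<le> real T}" for T :: nat
  show "incseq S" unfolding S_def incseq_def by auto
  show "S T \<in> sets M" for T unfolding S_def by measurable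
  show "(\<Union>T. S T) = {x \<in> space M. \<forall>i\<le>k. Y i x = y i}"
  proof (intro equalityI subsetI)
    fix x assume "x \<in> {x \<in> space M. \<forall>i\<le>k. Y i x = y i}"
    then show "x \<in> (\<Union>T. S T)"
      unfolding S_def by (intro UN_I[of "nat \<lceil>E k x\<rceil>"]) (auto intro: real_nat_ceiling_ge)
  qed (auto simp: S_def)
  have "(\<lambda>T. path_prob k y * erlang_CDF 0 1 (real T)) \<longlonglongrightarrow> path_prob k y * 1"
    by (intro tendsto_intros erlang_CDF_0_1_tendsto)
  then show "(\<lambda>T. measure M (S T)) \<longlonglongrightarrow> path_prob k y"
    unfolding S_def measure_path_last_holding by simp
qed

lemma path_prob_nonneg: "0 \<le> path_prob k y"
  unfolding measure_path[of k y, symmetric] by (rule measure_nonneg)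

lemma path_prob_snoc:
  assumes "length ys = Suc k"
  shows "path_prob (Suc k) (\<lambda>i. (ys @ [m]) ! i)
    = path_prob k (\<lambda>i. ys ! i) * (r (ys ! k) m / total_rate r (ys ! k))"
proof -
  have "(\<Prod>i<k. r ((ys @ [m]) ! i) ((ys @ [m]) ! Suc i) / total_rate r ((ys @ [m]) ! i))
      = (\<Prod>i<k. r (ys ! i) (ys ! Suc i) / total_rate r (ys ! i))"
    by (intro prod.cong) (use assms in \<open>auto simp: nth_append\<close>)
  moreover have "(ys @ [m]) ! 0 = ys ! 0" "(ys @ [m]) ! k = ys ! k" "(ys @ [m]) ! Suc k = m"
    using assms by (auto simp: nth_append)
  ultimately show ?thesis unfolding path_prob_def by (simp add: prod.lessThan_Suc)
qed

definition path_event :: "nat \<Rightarrow> nat list \<Rightarrow> 'a set" where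
  "path_event k ys = {x \<in> space M. \<forall>i\<le>k. Y i x = ys ! i}"

lemma path_event_sets [measurable]: "path_event k ys \<in> sets M"
  unfolding path_event_def by measurable

lemma measure_path_event: "measure M (path_event k ys) = path_prob k (\<lambda>i. ys ! i)"
  unfolding path_event_def by (rule measure_path)

lemma emeasure_state_inter:
  assumes X: "X \<in> sets M"
    and path: "\<And>ys. length ys = Suc k \<Longrightarrow> ys ! k = n \<Longrightarrow>
      emeasure M (path_event k ys \<inter> X) = emeasure M (path_event k ys) * c"
  shows "emeasure M ({x \<in> space M. Y k x = n} \<inter> X) = emeasure M {x \<in> space M. Y k x = n} * c"
proof -
  define P where "P = {ys :: nat list. length ys = Suc k \<and> ys ! k = n}"
  have cnt: "countable P" by (rule countableI_type)
  have state: "{x \<in> space M. Y k x = n} = (\<Union>ys\<in>P. path_event k ys)"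
  proof (intro equalityI subsetI)
    fix x assume x: "x \<in> {x \<in> space M. Y k x = n}"
    define ys where "ys = map (\<lambda>i. Y i x) [0..<Suc k]"
    have "ys \<in> P" "x \<in> path_event k ys" using x unfolding ys_def P_def path_event_def
      by (auto simp del: upt_Suc simp: nth_map_upt)
    then show "x \<in> (\<Union>ys\<in>P. path_event k ys)" by blast
  qed (auto simp: P_def path_event_def)
  have disj: "path_event k ys \<inter> path_event k zs = {}" if "ys \<in> P" "zs \<in> P" "ys \<noteq> zs" for ys zs
  proof -
    have "\<not> (\<forall>i<Suc k. ys ! i = zs ! i)"
      using that nth_equalityI[of ys zs] unfolding P_def by auto
    then obtain i where "i < Suc k" "ys ! i \<noteq> zs ! i" by blast
    then show ?thesis unfolding path_event_def by auto
  qed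
  have "emeasure M ({x \<in> space M. Y k x = n} \<inter> X)
      = (\<integral>\<^sup>+ys. emeasure M (path_event k ys \<inter> X) \<partial>count_space P)"
    unfolding state UN_extend_simps(4)
    using X cnt disj by (intro emeasure_UN_countable) (auto simp: disjoint_family_on_def)
  also have "\<dots> = (\<integral>\<^sup>+ys. emeasure M (path_event k ys) \<partial>count_space P) * c"
    by (subst nn_integral_multc[symmetric]) (auto intro!: nn_integral_cong simp: P_def path)
  also have "(\<integral>\<^sup>+ys. emeasure M (path_event k ys) \<partial>count_space P) = emeasure M {x \<in> space M. Y k x = n}"
    unfolding state using cnt disj
    by (intro emeasure_UN_countable[symmetric]) (auto simp: disjoint_family_on_def)
  finally show ?thesis .
qed

lemma emeasure_transition:
  "emeasure M {x \<in> space M. Y k x = n \<and> Y (Suc k) x = m}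
    = emeasure M {x \<in> space M. Y k x = n} * ennreal (r n m / total_rate r n)"
proof -
  have "emeasure M ({x \<in> space M. Y k x = n} \<inter> {x \<in> space M. Y (Suc k) x = m})
      = emeasure M {x \<in> space M. Y k x = n} * ennreal (r n m / total_rate r n)"
  proof (rule emeasure_state_inter)
    fix ys :: "nat list" assume ys: "length ys = Suc k" "ys ! k = n"
    have "path_event k ys \<inter> {x \<in> space M. Y (Suc k) x = m} = path_event (Suc k) (ys @ [m])"
      using ys unfolding path_event_def by (auto simp: nth_append le_Suc_eq)
    then have "emeasure M (path_event k ys \<inter> {x \<in> space M. Y (Suc k) x = m})
        = ennreal (path_prob k (\<lambda>i. ys ! i) * (r n m / total_rate r n))"
      using path_prob_snoc[OF ys(1), of m] ys(2)
      by (simp add: emeasure_eq_measure measure_path_event del: times_divide_eq_right)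
    also have "\<dots> = emeasure M (path_event k ys) * ennreal (r n m / total_rate r n)"
      by (simp only: emeasure_eq_measure measure_path_event ennreal_mult'[OF path_prob_nonneg])
    finally show "emeasure M (path_event k ys \<inter> {x \<in> space M. Y (Suc k) x = m})
        = emeasure M (path_event k ys) * ennreal (r n m / total_rate r n)" .
  qed measurable
  moreover have "{x \<in> space M. Y k x = n} \<inter> {x \<in> space M. Y (Suc k) x = m}
      = {x \<in> space M. Y k x = n \<and> Y (Suc k) x = m}" by blast
  ultimately show ?thesis by simp
qed

lemma emeasure_holding:
  "emeasure M {x \<in> space M. Y k x = n \<and> E k x \<le> s}
    = emeasure M {x \<in> space M. Y k x = n} * ennreal (erlang_CDF 0 1 s)"
proof -
  have "emeasure M ({x \<in> space M. Y k x = n} \<inter> {x \<in> space M. E k x \<le> s})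
      = emeasure M {x \<in> space M. Y k x = n} * ennreal (erlang_CDF 0 1 s)"
  proof (rule emeasure_state_inter)
    fix ys :: "nat list" assume ys: "length ys = Suc k" "ys ! k = n"
    have "path_event k ys \<inter> {x \<in> space M. E k x \<le> s}
        = {x \<in> space M. (\<forall>i\<le>k. Y i x = ys ! i) \<and> E k x \<le> s}"
      unfolding path_event_def by auto
    then show "emeasure M (path_event k ys \<inter> {x \<in> space M. E k x \<le> s})
        = emeasure M (path_event k ys) * ennreal (erlang_CDF 0 1 s)"
      using path_prob_nonneg
      by (simp add: emeasure_eq_measure measure_path_last_holding measure_path_event ennreal_mult')
  qed measurable
  moreover have "{x \<in> space M. Y k x = n} \<inter> {x \<in> space M. E k x \<le> s}
      = {x \<in> space M. Y k x = n \<and> E k x \<le> s}" by blast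
  ultimately show ?thesis by simp
qed

definition state_prob :: "nat \<Rightarrow> nat \<Rightarrow> ennreal" where
  "state_prob k n = emeasure M {x \<in> space M. Y k x = n}"

lemma state_prob_0: "state_prob 0 n = (if n = n0 then 1 else 0)"
  using measure_path[of 0 "\<lambda>_. n"] unfolding state_prob_def path_prob_def
  by (simp add: emeasure_eq_measure)

lemma state_prob_Suc: "state_prob (Suc k) m = (\<Sum>n. state_prob k n * ennreal (r n m / total_rate r n))"
proof -
  have "(\<Sum>n. state_prob k n * ennreal (r n m / total_rate r n))
      = (\<Sum>n. emeasure M {x \<in> space M. Y k x = n \<and> Y (Suc k) x = m})"
    unfolding state_prob_def emeasure_transition ..
  also have "\<dots> = emeasure M (\<Union>n. {x \<in> space M. Y k x = n \<and> Y (Suc k) x = m})"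
    by (rule suminf_emeasure) (auto simp: disjoint_family_on_def)
  also have "(\<Union>n. {x \<in> space M. Y k x = n \<and> Y (Suc k) x = m}) = {x \<in> space M. Y (Suc k) x = m}"
    by blast
  finally show ?thesis unfolding state_prob_def ..
qed

lemma nn_integral_holding_on_state:
  "(\<integral>\<^sup>+x. ennreal (E k x) * indicator {x \<in> space M. Y k x = n} x \<partial>M) = state_prob k n"
  unfolding state_prob_def
proof (rule nn_integral_exponential_on)
  fix a
  have "{x \<in> space M. Y k x = n} \<inter> {x \<in> space M. E k x \<le> a} = {x \<in> space M. Y k x = n \<and> E k x \<le> a}"
    by blast
  then show "emeasure M ({x \<in> space M. Y k x = n} \<inter> {x \<in> space M. E k x \<le> a})
      = emeasure M {x \<in> space M. Y k x = n} * ennreal (erlang_CDF 0 1 a)"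
    by (simp only: emeasure_holding)
qed measurable

lemma AE_holding_nonneg: "AE x in M. \<forall>k. 0 \<le> E k x"
proof -
  have "emeasure M {x \<in> space M. E k x \<le> 0} = 0" for k
  proof -
    have "{x \<in> space M. E k x \<le> 0} = (\<Union>n. {x \<in> space M. Y k x = n \<and> E k x \<le> 0})" by blast
    also have "emeasure M \<dots> = 0"
      by (rule emeasure_UN_eq_0) (auto simp: emeasure_holding erlang_CDF_0_1)
    finally show ?thesis .
  qed
  then have pos: "AE x in M. \<not> E k x \<le> 0" for k
    by (subst AE_iff_measurable[OF _ refl]) auto
  have "AE x in M. 0 \<le> E k x" for k using pos[of k] by eventually_elim simp
  then show ?thesis by (subst AE_all_countable) auto
qed

lemma nn_integral_holding_time:
  "(\<integral>\<^sup>+x. ennreal (E k x / total_rate r (Y k x)) \<partial>M) = (\<Sum>n. state_prob k n * ennreal (1 / total_rate r n))"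
proof -
  define A where "A n = {x \<in> space M. Y k x = n}" for n
  have [measurable]: "A n \<in> sets M" for n unfolding A_def by measurable
  have pointwise: "ennreal (E k x / total_rate r (Y k x))
      = (\<Sum>n. ennreal (E k x) * indicator (A n) x * ennreal (1 / total_rate r n))"
    if "x \<in> space M" for x
  proof -
    have "(\<Sum>n. ennreal (E k x) * indicator (A n) x * ennreal (1 / total_rate r n))
        = (\<Sum>n\<in>{Y k x}. ennreal (E k x) * indicator (A n) x * ennreal (1 / total_rate r n))"
      by (rule suminf_finite) (auto simp: A_def indicator_def)
    also have "\<dots> = ennreal (E k x) * ennreal (1 / total_rate r (Y k x))"
      using that by (simp add: A_def)
    also have "\<dots> = ennreal (E k x / total_rate r (Y k x))"
    proof (cases "0 \<le> E k x")
      case True then show ?thesis by (simp add: ennreal_mult'[symmetric])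
    next
      case False
      then have "E k x / total_rate r (Y k x) \<le> 0"
        using total_rate_nonneg[of "Y k x"] by (simp add: divide_nonpos_nonneg)
      then show ?thesis using False by (simp add: ennreal_neg)
    qed
    finally show ?thesis ..
  qed
  have "(\<integral>\<^sup>+x. ennreal (E k x / total_rate r (Y k x)) \<partial>M)
      = (\<Sum>n. \<integral>\<^sup>+x. ennreal (E k x) * indicator (A n) x * ennreal (1 / total_rate r n) \<partial>M)"
    by (simp only: nn_integral_cong[OF pointwise]) (rule nn_integral_suminf, measurable)
  also have "\<dots> = (\<Sum>n. (\<integral>\<^sup>+x. ennreal (E k x) * indicator (A n) x \<partial>M) * ennreal (1 / total_rate r n))"
    by (subst nn_integral_multc) measurable
  finally show ?thesis unfolding A_def nn_integral_holding_on_state .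
qed
lemma expected_next_lyapunov_le:
  assumes g_nonneg: "\<And>m. 0 \<le> g m" and g_le: "\<And>m. g m \<le> G" and eps: "0 < \<epsilon>"
    and drift: "total_rate r n \<noteq> 0 \<Longrightarrow> (\<Sum>m. r n m * (g m - g n)) \<le> - \<epsilon>"
  shows "(\<Sum>m. ennreal (r n m / total_rate r n) * ennreal (g m)) + ennreal (\<epsilon> / total_rate r n)
    \<le> ennreal (g n)"
proof (cases "total_rate r n = 0")
  case True
  \<comment> \<open>An absorbing state: both sides vanish by the convention \<open>x / 0 = 0\<close>.\<close>
  then show ?thesis by simp
next
  case False
  define q where "q = total_rate r n"
  define S where "S = (\<Sum>m. r n m * g m)"
  have q: "0 < q" using False total_rate_nonneg[of n] unfolding q_def by simp
  have sg: "summable (\<lambda>m. r n m * g m)"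
  proof (rule summable_comparison_test')
    show "summable (\<lambda>m. r n m * G)" using rate_summable by (rule summable_mult2)
    show "norm (r n m * g m) \<le> r n m * G" for m
      using rate_nonneg[of n m] g_nonneg[of m] g_le[of m] by (simp add: mult_left_mono)
  qed
  have S0: "0 \<le> S" unfolding S_def using sg rate_nonneg g_nonneg by (intro suminf_nonneg) auto
  have "(\<Sum>m. r n m * (g m - g n)) = (\<Sum>m. r n m * g m - r n m * g n)"
    by (simp add: right_diff_distrib)
  also have "\<dots> = S - q * g n"
    unfolding S_def q_def total_rate_def
    using suminf_diff[OF sg summable_mult2[OF rate_summable, of n "g n"]]
      suminf_mult2[OF rate_summable, of n "g n"] by simp
  finally have "S + \<epsilon> \<le> q * g n" using drift False unfolding q_def by simp
  then have key: "S / q + \<epsilon> / q \<le> g n"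
    using q by (simp add: add_divide_distrib[symmetric] pos_divide_le_eq mult.commute)
  have "(\<Sum>m. ennreal (r n m / q) * ennreal (g m)) = (\<Sum>m. ennreal (r n m * g m / q))"
    using rate_nonneg g_nonneg q by (simp add: ennreal_mult[symmetric])
  also have "\<dots> = ennreal (\<Sum>m. r n m * g m / q)"
    using rate_nonneg g_nonneg q summable_divide[OF sg, of q] by (intro suminf_ennreal2) auto
  also have "(\<Sum>m. r n m * g m / q) = S / q" unfolding S_def by (rule suminf_divide[OF sg])
  finally have "(\<Sum>m. ennreal (r n m / q) * ennreal (g m)) + ennreal (\<epsilon> / q) = ennreal (S / q + \<epsilon> / q)"
    using S0 q eps by (simp add: ennreal_plus)
  also have "\<dots> \<le> ennreal (g n)" using key by (rule ennreal_leI)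
  finally show ?thesis unfolding q_def .
qed

lemma expected_lyapunov_step:
  assumes g_nonneg: "\<And>m. 0 \<le> g m" and g_le: "\<And>m. g m \<le> G" and eps: "0 < \<epsilon>"
    and drift: "\<And>n. total_rate r n \<noteq> 0 \<Longrightarrow> (\<Sum>m. r n m * (g m - g n)) \<le> - \<epsilon>"
  shows "(\<Sum>n. state_prob (Suc k) n * ennreal (g n))
      + ennreal \<epsilon> * (\<Sum>n. state_prob k n * ennreal (1 / total_rate r n))
    \<le> (\<Sum>n. state_prob k n * ennreal (g n))"
proof -
  have "(\<Sum>m. state_prob (Suc k) m * ennreal (g m))
      = (\<Sum>m. (\<Sum>n. state_prob k n * ennreal (r n m / total_rate r n)) * ennreal (g m))"
    unfolding state_prob_Suc ..
  also have "\<dots> = (\<Sum>m. \<Sum>n. state_prob k n * (ennreal (r n m / total_rate r n) * ennreal (g m)))"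
    by (simp only: ennreal_suminf_multc[symmetric] mult.assoc)
  also have "\<dots> = (\<Sum>n. \<Sum>m. state_prob k n * (ennreal (r n m / total_rate r n) * ennreal (g m)))"
    by (rule suminf_ennreal_commute)
  also have "\<dots> = (\<Sum>n. state_prob k n * (\<Sum>m. ennreal (r n m / total_rate r n) * ennreal (g m)))"
    by (simp only: ennreal_suminf_cmult)
  finally have next_state: "(\<Sum>m. state_prob (Suc k) m * ennreal (g m))
      = (\<Sum>n. state_prob k n * (\<Sum>m. ennreal (r n m / total_rate r n) * ennreal (g m)))" .
  have "ennreal \<epsilon> * (state_prob k n * ennreal (1 / total_rate r n))
      = state_prob k n * ennreal (\<epsilon> / total_rate r n)" for n
    using eps total_rate_nonneg[of n]
    by (simp add: ennreal_mult[symmetric] mult.left_commute[of "ennreal \<epsilon>"])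
  then have holding: "ennreal \<epsilon> * (\<Sum>n. state_prob k n * ennreal (1 / total_rate r n))
      = (\<Sum>n. state_prob k n * ennreal (\<epsilon> / total_rate r n))"
    by (simp only: ennreal_suminf_cmult[symmetric])
  have "(\<Sum>n. state_prob (Suc k) n * ennreal (g n))
      + ennreal \<epsilon> * (\<Sum>n. state_prob k n * ennreal (1 / total_rate r n))
    = (\<Sum>n. state_prob k n * ((\<Sum>m. ennreal (r n m / total_rate r n) * ennreal (g m))
        + ennreal (\<epsilon> / total_rate r n)))"
    unfolding next_state holding distrib_left by (rule suminf_add[OF summableI summableI])
  also have "\<dots> \<le> (\<Sum>n. state_prob k n * ennreal (g n))"
    using expected_next_lyapunov_le[OF g_nonneg g_le eps drift]
    by (intro suminf_le summableI mult_left_mono) auto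
  finally show ?thesis .
qed
lemma expected_total_holding_time_le:
  assumes g_nonneg: "\<And>m. 0 \<le> g m" and g_le: "\<And>m. g m \<le> G" and eps: "0 < \<epsilon>"
    and drift: "\<And>n. total_rate r n \<noteq> 0 \<Longrightarrow> (\<Sum>m. r n m * (g m - g n)) \<le> - \<epsilon>"
  shows "ennreal \<epsilon> * (\<Sum>k. \<integral>\<^sup>+x. ennreal (E k x / total_rate r (Y k x)) \<partial>M) \<le> ennreal (g n0)"
proof -
  define V where "V k = (\<Sum>n. state_prob k n * ennreal (g n))" for k
  define H where "H k = (\<Sum>n. state_prob k n * ennreal (1 / total_rate r n))" for k
  have V0: "V 0 = ennreal (g n0)"
    unfolding V_def state_prob_0 by (subst suminf_finite[of "{n0}"]) auto
  have bound: "V k + ennreal \<epsilon> * (\<Sum>j<k. H j) \<le> ennreal (g n0)" for k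
  proof (induction k)
    case 0
    then show ?case by (simp add: V0)
  next
    case (Suc k)
    have "V (Suc k) + ennreal \<epsilon> * (\<Sum>j<Suc k. H j)
        = (V (Suc k) + ennreal \<epsilon> * H k) + ennreal \<epsilon> * (\<Sum>j<k. H j)"
      by (simp add: distrib_left add.assoc)
    also have "\<dots> \<le> V k + ennreal \<epsilon> * (\<Sum>j<k. H j)"
      unfolding V_def H_def by (intro add_right_mono expected_lyapunov_step[OF g_nonneg g_le eps drift])
    finally show ?case using Suc.IH by simp
  qed
  have "(\<Sum>j<k. ennreal \<epsilon> * H j) \<le> ennreal (g n0)" for k
  proof -
    have "(\<Sum>j<k. ennreal \<epsilon> * H j) \<le> V k + ennreal \<epsilon> * (\<Sum>j<k. H j)"
      by (simp add: sum_distrib_left)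
    also have "\<dots> \<le> ennreal (g n0)" by (rule bound)
    finally show ?thesis .
  qed
  then have "(\<Sum>j. ennreal \<epsilon> * H j) \<le> ennreal (g n0)"
    unfolding suminf_eq_SUP by (rule SUP_least)
  then have "ennreal \<epsilon> * (\<Sum>j. H j) \<le> ennreal (g n0)" by simp
  then show ?thesis unfolding H_def nn_integral_holding_time .
qed

lemma summable_holding_times:
  assumes g_nonneg: "\<And>m. 0 \<le> g m" and g_le: "\<And>m. g m \<le> G" and eps: "0 < \<epsilon>"
    and drift: "\<And>n. total_rate r n \<noteq> 0 \<Longrightarrow> (\<Sum>m. r n m * (g m - g n)) \<le> - \<epsilon>"
  shows "AE x in M. summable (\<lambda>k. E k x / total_rate r (Y k x))"
proof -
  have [measurable]: "(\<lambda>x. total_rate r (Y k x)) \<in> borel_measurable M" for k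
    by (rule measurable_compose[OF measurable_Y]) simp
  have finite: "(\<Sum>k. \<integral>\<^sup>+x. ennreal (E k x / total_rate r (Y k x)) \<partial>M) \<noteq> \<top>"
    using expected_total_holding_time_le[OF g_nonneg g_le eps drift] eps
    by (auto simp: ennreal_mult_top top_unique)
  have sum_integral: "(\<integral>\<^sup>+x. (\<Sum>k. ennreal (E k x / total_rate r (Y k x))) \<partial>M)
      = (\<Sum>k. \<integral>\<^sup>+x. ennreal (E k x / total_rate r (Y k x)) \<partial>M)"
    by (rule nn_integral_suminf) measurable
  have "AE x in M. (\<Sum>k. ennreal (E k x / total_rate r (Y k x))) \<noteq> \<infinity>"
    by (rule nn_integral_noteq_infinite) (measurable, simp add: sum_integral finite)
  with AE_holding_nonneg show ?thesis
  proof eventually_elim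
    case (elim x)
    then have "(\<Sum>k. ennreal (E k x / total_rate r (Y k x))) \<noteq> \<top>" by simp
    then show ?case using elim(1) total_rate_nonneg by (intro summable_suminf_not_top) auto
  qed
qed

end

theorem theorem2p8:
  fixes lam_dens :: "real \<Rightarrow> real" and mu :: "nat \<Rightarrow> real"
    and b \<alpha> :: real
  assumes lam_meas: "lam_dens \<in> borel_measurable lborel"
    and lam_nonneg: "\<And>x. x \<in> {0..1} \<Longrightarrow> 0 \<le> lam_dens x"
    and lam_fin: "set_integrable lborel {0..1} lam_dens"
    and mu_nonneg: "\<And>k. 1 \<le> k \<Longrightarrow> 0 \<le> mu k"
    and mu_fin: "summable (\<lambda>k. mu (Suc k))"
    and C1: "b > 0" "0 < \<alpha>" "\<alpha> \<le> 1"
      "(\<lambda>n. mu n) \<sim>[at_top] (\<lambda>n. b * ln (real n) powr \<alpha> / (real n)\<^sup>2)"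
    and C2: "\<exists>\<beta> c1 c2. \<beta> > 1 \<and> c1 > 0 \<and> c2 > 0 \<and>
      (\<forall>x\<in>{0<..<1}. c1 * ln (1 / x) powr (\<beta> - 1) \<le> lam_dens x \<and>
                      lam_dens x \<le> c2 * ln (1 / x) powr (\<beta> - 1))"
    and lim: "limsup (\<lambda>n. ereal ((Phi_Lambda lam_dens n - Phi_mu mu n) /
                 (real n * ln (real n) * (ln (ln (real n)))\<^sup>2))) = -\<infinity>"
  shows "\<forall>n0\<ge>1. \<forall>(M::'a measure) Y E. jump_hold_process (N_rate lam_dens mu) n0 M Y E \<longrightarrow>
           (AE x in M. summable (\<lambda>k. E k x / total_rate (N_rate lam_dens mu) (Y k x)))"
proof (intro allI impI)
  fix n0 :: nat and M :: "'a measure" and Y E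
  assume "jump_hold_process (N_rate lam_dens mu) n0 M Y E"
  then interpret jump_hold "N_rate lam_dens mu" n0 M Y E
    using N_rate_nonneg[OF lam_nonneg mu_nonneg] summable_N_rate[OF mu_nonneg mu_fin]
    by unfold_locales
  obtain g \<epsilon> G where eps: "0 < \<epsilon>" and g: "\<And>n. 0 \<le> g n \<and> g n \<le> G"
    and drift: "\<And>n. 1 \<le> n \<Longrightarrow> (\<Sum>m. N_rate lam_dens mu n m * (g m - g n)) \<le> - \<epsilon>"
    using N_rate_lyapunov_drift[OF lam_meas lam_nonneg lam_fin mu_nonneg mu_fin C1(1,3,4) lim] by blast
  have "(\<Sum>m. N_rate lam_dens mu n m * (g m - g n)) \<le> - \<epsilon>"
    if "total_rate (N_rate lam_dens mu) n \<noteq> 0" for n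
    using that drift[of n] total_rate_N_rate_0 by (cases n) auto
  then show "AE x in M. summable (\<lambda>k. E k x / total_rate (N_rate lam_dens mu) (Y k x))"
    using summable_holding_times[of g G \<epsilon>] g eps by blast
qed

end
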